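(* Suppose $\mathbf{X}=\mathbf{D}_1\boldsymbol{\Gamma}_1$, $\boldsymbol{\Gamma}_{i-1}=\mathbf{D}_i\boldsymbol{\Gamma}_i$ for $2\le i\le K$, all $\boldsymbol{\Gamma}_i\ne0$, and $\mathbf{Y}=\mathbf{X}+\mathbf{E}$ with $\|\mathbf{E}\|_{2,\infty}^{p}\le\epsilon_0$. Let $|\Gamma_i^{\min}|,|\Gamma_i^{\max}|$ be the smallest and largest absolute values of the nonzero entries of $\boldsymbol{\Gamma}_i$. Let $\hat{\boldsymbol{\Gamma}}_0=\mathbf{Y}$ and $\hat{\boldsymbol{\Gamma}}_i=\mathcal{H}_{\beta_i}(\mathbf{D}_i^T\hat{\boldsymbol{\Gamma}}_{i-1})$ for $1\le i\le K$ (layered hard thresholding). Define recursively $$\epsilon_i=\sqrt{\|\boldsymbol{\Gamma}_i\|_{0,\infty}^{p}}\,\big(\epsilon_{i-1}+\mu(\mathbf{D}_i)(\|\boldsymbol{\Gamma}_i\|_{0,\infty}^{s}-1)|\Gamma_i^{\max}|\big).$$ Assume that for all $1\le i\le K$: (a) $\|\boldsymbol{\Gamma}_i\|_{0,\infty}^{s}<\tfrac12\Big(1+\tfrac{1}{\mu(\mathbf{D}_i)}\tfrac{|\Gamma_i^{\min}|}{|\Gamma_i^{\max}|}\Big)-\tfrac{1}{\mu(\mathbf{D}_i)}\tfrac{\epsilon_{i-1}}{|\Gamma_i^{\max}|}$; and (b) $|\Gamma_i^{\min}|-(\|\boldsymbol{\Gamma}_i\|_{0,\infty}^{s}-1)\mu(\mathbf{D}_i)|\Gamma_i^{\max}|-\epsilon_{i-1}>\beta_i>\|\boldsymbol{\Gamma}_i\|_{0,\infty}^{s}\mu(\mathbf{D}_i)|\Gamma_i^{\max}|+\epsilon_{i-1}$.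 Then for all $1\le i\le K$: (1) the support of $\hat{\boldsymbol{\Gamma}}_i$ equals that of $\boldsymbol{\Gamma}_i$; and (2) $\|\boldsymbol{\Gamma}_i-\hat{\boldsymbol{\Gamma}}_i\|_{2,\infty}^{p}\le\epsilon_i$.
   Context: Setting. Signals are one-dimensional of length $N$ with periodic boundary conditions; $m_0=1$, $\boldsymbol{\Gamma}_0=\mathbf{X}$. For $i\ge1$, $\boldsymbol{\Gamma}_i\in\mathbb{R}^{Nm_i}$ has entry $km_i+r$ equal to the coefficient of filter $r$ at spatial shift $k$. $\mathbf{D}_i\in\mathbb{R}^{Nm_{i-1}\times Nm_i}$ is a (stride) convolutional dictionary whose column $km_i+r$ is local filter $r$ (length $n_{i-1}m_{i-1}$) placed cyclically on entries $km_{i-1},\dots,km_{i-1}+n_{i-1}m_{i-1}-1$, zero elsewhere. Columns have unit $\ell_2$ norm; $\mu(\mathbf{D})=\max_{i\neq j}|\mathbf{d}_i^T\mathbf{d}_j|$. Stripes: $\mathbf{S}_{i,j}\boldsymbol{\Gamma}_i$ is the subvector of $\boldsymbol{\Gamma}_i$ at spatial shifts $k\in\{j-n_{i-1}+1,\dots,j+n_{i-1}-1\}$ (mod $N$), all channels; $\|\boldsymbol{\Gamma}_i\|_{0,\infty}^{s}=\max_j\|\mathbf{S}_{i,j}\boldsymbol{\Gamma}_i\|_0$. Patches: for $i\ge0$, $\mathbf{P}_{i,j}\mathbf{V}$ extracts from $\mathbf{V}\in\mathbb{R}^{Nm_i}$ the cyclically contiguous subvector at spatial shifts $j,\dots,j+n_i-1$,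 all channels (length $n_im_i$); $\|\mathbf{V}\|_{2,\infty}^{p}=\max_j\|\mathbf{P}_{i,j}\mathbf{V}\|_2$, $\|\mathbf{V}\|_{0,\infty}^{p}=\max_j\|\mathbf{P}_{i,j}\mathbf{V}\|_0$. For the last layer $\boldsymbol{\Gamma}_K$, the patch size $n_K$ is an arbitrary fixed choice. Hard thresholding: $\mathcal{H}_\beta$ acts entrywise, $\mathcal{H}_\beta(z)=z$ if $|z|>\beta$ and $0$ otherwise. *)

theory Defs
  imports Complex_Main
begin

text \<open>Vectors of R^(N*m) are functions nat => real; only indices below N*m matter.
  Index k*m + r: spatial shift k < N, channel r < m.\<close>

definition patch_idx :: "nat \<Rightarrow> nat \<Rightarrow> nat \<Rightarrow> nat \<Rightarrow> nat set" where
  "patch_idx N mm nn j = {k * mm + r | k r. r < mm \<and> (\<exists>t<nn. k = (j + t) mod N)}"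

definition stripe_idx :: "nat \<Rightarrow> nat \<Rightarrow> nat \<Rightarrow> nat \<Rightarrow> nat set" where
  "stripe_idx N mm nprev j = {k * mm + r | k r. r < mm \<and>
      (\<exists>t::int. \<bar>t\<bar> < int nprev \<and> int k = (int j + t) mod int N)}"

definition patch_norm2 :: "nat \<Rightarrow> nat \<Rightarrow> nat \<Rightarrow> (nat \<Rightarrow> real) \<Rightarrow> real" where
  "patch_norm2 N mm nn V = Max ((\<lambda>j. sqrt (\<Sum>c\<in>patch_idx N mm nn j. (V c)\<^sup>2)) ` {..<N})"

definition patch_norm0 :: "nat \<Rightarrow> nat \<Rightarrow> nat \<Rightarrow> (nat \<Rightarrow> real) \<Rightarrow> nat" where
  "patch_norm0 N mm nn V = Max ((\<lambda>j. card {c\<in>patch_idx N mm nn j. V c \<noteq> 0}) ` {..<N})"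

definition stripe_norm0 :: "nat \<Rightarrow> nat \<Rightarrow> nat \<Rightarrow> (nat \<Rightarrow> real) \<Rightarrow> nat" where
  "stripe_norm0 N mm nprev V = Max ((\<lambda>j. card {c\<in>stripe_idx N mm nprev j. V c \<noteq> 0}) ` {..<N})"

text \<open>Stride convolutional dictionary (N*mprev rows, N*mcur columns): column k*mcur+r is
  filter r (F r : coefficients 0..nprev*mprev-1) placed cyclically starting at row k*mprev.\<close>
definition conv_dict :: "nat \<Rightarrow> nat \<Rightarrow> nat \<Rightarrow> nat \<Rightarrow> (nat \<Rightarrow> nat \<Rightarrow> real) \<Rightarrow> nat \<Rightarrow> nat \<Rightarrow> real" where
  "conv_dict N mprev nprev mcur F a c =
     (let off = nat ((int a - int ((c div mcur) * mprev)) mod int (N * mprev))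
      in if off < nprev * mprev then F (c mod mcur) off else 0)"

definition mat_vec :: "nat \<Rightarrow> (nat \<Rightarrow> nat \<Rightarrow> real) \<Rightarrow> (nat \<Rightarrow> real) \<Rightarrow> nat \<Rightarrow> real" where
  "mat_vec ncols A v = (\<lambda>a. \<Sum>c<ncols. A a c * v c)"

definition tr_mat_vec :: "nat \<Rightarrow> (nat \<Rightarrow> nat \<Rightarrow> real) \<Rightarrow> (nat \<Rightarrow> real) \<Rightarrow> nat \<Rightarrow> real" where
  "tr_mat_vec nrows A v = (\<lambda>c. \<Sum>a<nrows. A a c * v a)"

text \<open>Mutual coherence; the 0 only matters when there is a single column.\<close>
definition coherence :: "nat \<Rightarrow> nat \<Rightarrow> (nat \<Rightarrow> nat \<Rightarrow> real) \<Rightarrow> real" where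
  "coherence nrows ncols A = Max (insert 0
     {\<bar>\<Sum>a<nrows. A a c * A a c'\<bar> | c c'. c < ncols \<and> c' < ncols \<and> c \<noteq> c'})"

definition supp :: "nat \<Rightarrow> (nat \<Rightarrow> real) \<Rightarrow> nat set" where
  "supp dd V = {c. c < dd \<and> V c \<noteq> 0}"

definition gmin :: "nat \<Rightarrow> (nat \<Rightarrow> real) \<Rightarrow> real" where
  "gmin dd V = Min ((\<lambda>c. \<bar>V c\<bar>) ` supp dd V)"

definition gmax :: "nat \<Rightarrow> (nat \<Rightarrow> real) \<Rightarrow> real" where
  "gmax dd V = Max ((\<lambda>c. \<bar>V c\<bar>) ` supp dd V)"

definition hard_thr :: "real \<Rightarrow> (nat \<Rightarrow> real) \<Rightarrow> nat \<Rightarrow> real" where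
  "hard_thr \<beta> v = (\<lambda>c. if \<bar>v c\<bar> > \<beta> then v c else 0)"

definition dict :: "nat \<Rightarrow> (nat \<Rightarrow> nat) \<Rightarrow> (nat \<Rightarrow> nat) \<Rightarrow> (nat \<Rightarrow> nat \<Rightarrow> nat \<Rightarrow> real)
    \<Rightarrow> nat \<Rightarrow> nat \<Rightarrow> nat \<Rightarrow> real" where
  "dict N m n F i = conv_dict N (m (i - 1)) (n (i - 1)) (m i) (F i)"

definition mu_layer :: "nat \<Rightarrow> (nat \<Rightarrow> nat) \<Rightarrow> (nat \<Rightarrow> nat) \<Rightarrow> (nat \<Rightarrow> nat \<Rightarrow> nat \<Rightarrow> real)
    \<Rightarrow> nat \<Rightarrow> real" where
  "mu_layer N m n F i = coherence (N * m (i - 1)) (N * m i) (dict N m n F i)"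

primrec ghat :: "nat \<Rightarrow> (nat \<Rightarrow> nat) \<Rightarrow> (nat \<Rightarrow> nat) \<Rightarrow> (nat \<Rightarrow> nat \<Rightarrow> nat \<Rightarrow> real)
    \<Rightarrow> (nat \<Rightarrow> real) \<Rightarrow> (nat \<Rightarrow> real) \<Rightarrow> nat \<Rightarrow> nat \<Rightarrow> real" where
  "ghat N m n F \<beta> Y 0 = Y"
| "ghat N m n F \<beta> Y (Suc i) =
     hard_thr (\<beta> (Suc i)) (tr_mat_vec (N * m i) (dict N m n F (Suc i)) (ghat N m n F \<beta> Y i))"

primrec eps_seq :: "nat \<Rightarrow> (nat \<Rightarrow> nat) \<Rightarrow> (nat \<Rightarrow> nat) \<Rightarrow> (nat \<Rightarrow> nat \<Rightarrow> nat \<Rightarrow> real)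
    \<Rightarrow> (nat \<Rightarrow> nat \<Rightarrow> real) \<Rightarrow> real \<Rightarrow> nat \<Rightarrow> real" where
  "eps_seq N m n F \<Gamma> \<epsilon>0 0 = \<epsilon>0"
| "eps_seq N m n F \<Gamma> \<epsilon>0 (Suc i) =
     sqrt (real (patch_norm0 N (m (Suc i)) (n (Suc i)) (\<Gamma> (Suc i)))) *
     (eps_seq N m n F \<Gamma> \<epsilon>0 i + mu_layer N m n F (Suc i) *
        (real (stripe_norm0 N (m (Suc i)) (n i) (\<Gamma> (Suc i))) - 1) * gmax (N * m (Suc i)) (\<Gamma> (Suc i)))"

end

theory Submission
  imports Defs "HOL-Analysis.L2_Norm"
begin

text \<open>Each layer is one step of the single-layer thresholding argument. Because the dictionary
  columns are local filters, the correlation of column c with the previous (noisy) layer splits into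
  the true coefficient \<Gamma> c, a crosstalk term that only involves the atoms of \<Gamma> in the stripe
  around c (each contributing at most \<mu> |\<Gamma>_max|), and a noise term that only sees one patch of
  the previous error and is therefore bounded by its patch norm via Cauchy-Schwarz. The two-sided
  condition on \<beta> then makes thresholding keep exactly the support, with entrywise error
  \<epsilon>_(i-1) + \<mu> (s - 1) |\<Gamma>_max|; summing squares over a patch, which contains at most
  \<parallel>\<Gamma>_i\<parallel>_{0,\<infinity>}^p atoms, gives \<epsilon>_i, and induction over the layers finishes.\<close>

lemma patch_idx_subset:
  assumes "N > 0" shows "patch_idx N M nn j \<subseteq> {..<N * M}"
proof
  fix x assume "x \<in> patch_idx N M nn j"
  then obtain k r where x: "x = k * M + r" "r < M" "k < N"
    using assms unfolding patch_idx_def by auto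
  then have "(k + 1) * M \<le> N * M" by (intro mult_le_mono1) simp
  then show "x \<in> {..<N * M}" using x by simp
qed

lemma stripe_idx_subset:
  assumes "N > 0" shows "stripe_idx N M nn j \<subseteq> {..<N * M}"
proof
  fix x assume "x \<in> stripe_idx N M nn j"
  then obtain k r t where x: "x = k * M + r" "r < M" "int k = (int j + t) mod int N"
    unfolding stripe_idx_def by blast
  then have "k < N" using assms by (metis of_nat_less_iff of_nat_0_less_iff pos_mod_bound)
  then have "(k + 1) * M \<le> N * M" by (intro mult_le_mono1) simp
  then show "x \<in> {..<N * M}" using x by simp
qed

lemma mem_patch_idxI:
  assumes M: "M > 0" and N: "N > 0" and a: "a < N * M" and k: "k < N"
    and off: "(int a - int (k * M)) mod int (N * M) < int (nn * M)"
  shows "a \<in> patch_idx N M nn k"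
proof -
  define s where "s = a div M"
  define \<rho> where "\<rho> = a mod M"
  define t where "t = (int s - int k) mod int N"
  have s: "s < N" unfolding s_def using a M by (simp add: less_mult_imp_div_less)
  have \<rho>: "\<rho> < M" unfolding \<rho>_def using M by simp
  have t: "0 \<le> t" "t < int N" unfolding t_def using N by simp_all
  have "t * int M + int \<rho> < int (N * M)"
  proof -
    have "t + 1 \<le> int N" using t by simp
    then have "(t + 1) * int M \<le> int N * int M" using M by (intro mult_right_mono) simp_all
    then show ?thesis using \<rho> by (simp add: algebra_simps)
  qed
  moreover have "int a - int (k * M) = (t * int M + int \<rho>) + int (N * M) * ((int s - int k) div int N)"
  proof -
    have "int s - int k = t + int N * ((int s - int k) div int N)" unfolding t_def by simp
    moreover have "int a = int s * int M + int \<rho>" unfolding s_def \<rho>_def by (simp flip: of_nat_mult of_nat_add)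
    ultimately show ?thesis unfolding of_nat_mult by algebra
  qed
  ultimately have "(int a - int (k * M)) mod int (N * M) = t * int M + int \<rho>"
    using t by simp
  then have "t * int M < int nn * int M" using off by simp
  then have tn: "t < int nn" using M by (simp add: mult_less_cancel_right)
  have "int s = (int k + t) mod int N" unfolding t_def using s by (simp add: mod_add_right_eq)
  also have "\<dots> = int ((k + nat t) mod N)" using t by (simp add: zmod_int)
  finally have "s = (k + nat t) mod N" by (simp only: of_nat_eq_iff)
  moreover have "a = s * M + \<rho>" unfolding s_def \<rho>_def by simp
  ultimately show ?thesis unfolding patch_idx_def using \<rho> tn t
    by (intro CollectI exI[of _ s] exI[of _ \<rho>]) (auto intro!: exI[of _ "nat t"])
qed

lemma conv_dict_nonzero_in_patch:
  assumes N: "N > 0" and a: "a < N * M" and c: "c < N * mc"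
    and nz: "conv_dict N M nprev mc F a c \<noteq> 0"
  shows "a \<in> patch_idx N M nprev (c div mc)"
proof (rule mem_patch_idxI[OF _ N a])
  show "M > 0" using a by (intro gr0I) simp
  show "c div mc < N" using c by (simp add: less_mult_imp_div_less)
  have "nat ((int a - int (c div mc * M)) mod int (N * M)) < nprev * M"
    using nz unfolding conv_dict_def Let_def by (auto split: if_splits)
  then show "(int a - int (c div mc * M)) mod int (N * M) < int (nprev * M)"
    by linarith
qed

lemma patch_overlap_in_stripe:
  assumes M: "M > 0" and a: "a \<in> patch_idx N M nn k" and a': "a \<in> patch_idx N M nn k'"
    and k': "k' < N" and r: "r < mc"
  shows "k' * mc + r \<in> stripe_idx N mc nn k"
proof -
  obtain t where t: "t < nn" "a div M = (k + t) mod N"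
    using a M unfolding patch_idx_def by auto
  obtain t' where t': "t' < nn" "a div M = (k' + t') mod N"
    using a' M unfolding patch_idx_def by auto
  have "(int k + int t) mod int N = (int k' + int t') mod int N"
    using t t' by (metis of_nat_add zmod_int)
  then have "(int k + (int t - int t')) mod int N = int k' mod int N"
    by (metis add_diff_cancel_right' add_diff_eq mod_diff_left_eq)
  then have "int k' = (int k + (int t - int t')) mod int N" using k' by simp
  moreover have "\<bar>int t - int t'\<bar> < int nn" using t t' by auto
  ultimately show ?thesis unfolding stripe_idx_def using r by blast
qed

lemma coherence_finite:
  fixes A :: "nat \<Rightarrow> nat \<Rightarrow> real"
  shows "finite {\<bar>\<Sum>a<nr. A a c * A a c'\<bar> | c c'. c < nc \<and> c' < nc \<and> c \<noteq> c'}"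
  by (rule finite_subset[OF _ finite_image_set2[of "\<lambda>c. c < nc" "\<lambda>c'. c' < nc"]])
    (auto simp: finite_Collect_less_nat)

lemma coherence_nonneg: "0 \<le> coherence nr nc A"
  unfolding coherence_def using coherence_finite by (intro Max_ge) auto

lemma abs_inner_le_coherence:
  assumes "c < nc" "c' < nc" "c \<noteq> c'"
  shows "\<bar>\<Sum>a<nr. A a c * A a c'\<bar> \<le> coherence nr nc A"
  unfolding coherence_def using assms coherence_finite by (intro Max_ge) auto

lemma L2_set_patch_le_patch_norm2:
  "j < N \<Longrightarrow> L2_set V (patch_idx N M nn j) \<le> patch_norm2 N M nn V"
  unfolding patch_norm2_def L2_set_def by (intro Max_ge) auto

lemma patch_norm2_nonneg: "N > 0 \<Longrightarrow> 0 \<le> patch_norm2 N M nn V"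
  by (rule order_trans[OF L2_set_nonneg L2_set_patch_le_patch_norm2])

lemma patch_norm2_cong_abs:
  assumes N: "N > 0" and eq: "\<And>c. c < N * M \<Longrightarrow> \<bar>f c\<bar> = \<bar>g c\<bar>"
  shows "patch_norm2 N M nn f = patch_norm2 N M nn g"
proof -
  have "(f c)\<^sup>2 = (g c)\<^sup>2" if "c \<in> patch_idx N M nn j" for c j
  proof -
    have "c < N * M" using that patch_idx_subset[OF N] by blast
    then show ?thesis using eq by (metis power2_abs)
  qed
  then have "(\<Sum>c\<in>patch_idx N M nn j. (f c)\<^sup>2) = (\<Sum>c\<in>patch_idx N M nn j. (g c)\<^sup>2)" for j
    by (intro sum.cong) simp_all
  then show ?thesis unfolding patch_norm2_def by simp
qed

lemma patch_norm2_le_sqrt_patch_norm0: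
  assumes N: "N > 0" and B: "0 \<le> B"
    and off: "\<And>c. c < N * M \<Longrightarrow> \<Gamma> c = 0 \<Longrightarrow> u c = 0"
    and on: "\<And>c. c < N * M \<Longrightarrow> \<Gamma> c \<noteq> 0 \<Longrightarrow> \<bar>u c\<bar> \<le> B"
  shows "patch_norm2 N M nn u \<le> sqrt (real (patch_norm0 N M nn \<Gamma>)) * B"
  unfolding patch_norm2_def
proof (rule Max.boundedI)
  fix x assume "x \<in> (\<lambda>j. sqrt (\<Sum>c\<in>patch_idx N M nn j. (u c)\<^sup>2)) ` {..<N}"
  then obtain j where j: "j < N" and x: "x = sqrt (\<Sum>c\<in>patch_idx N M nn j. (u c)\<^sup>2)" by auto
  define P where "P = patch_idx N M nn j"
  have P_sub: "P \<subseteq> {..<N * M}" unfolding P_def by (rule patch_idx_subset[OF N])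
  then have P_fin: "finite P" by (rule finite_subset) simp
  have "(\<Sum>c\<in>P. (u c)\<^sup>2) \<le> (\<Sum>c\<in>P. if \<Gamma> c \<noteq> 0 then B\<^sup>2 else 0)"
  proof (rule sum_mono)
    fix c assume "c \<in> P"
    then have c: "c < N * M" using P_sub by blast
    show "(u c)\<^sup>2 \<le> (if \<Gamma> c \<noteq> 0 then B\<^sup>2 else 0)"
    proof (cases "\<Gamma> c = 0")
      case False
      then have "\<bar>u c\<bar>\<^sup>2 \<le> B\<^sup>2" using on[OF c] by (intro power_mono) auto
      then show ?thesis using False by simp
    qed (simp add: off[OF c])
  qed
  also have "\<dots> = real (card {c \<in> P. \<Gamma> c \<noteq> 0}) * B\<^sup>2"
    using P_fin by (simp add: sum.inter_filter[symmetric])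
  also have "\<dots> \<le> real (patch_norm0 N M nn \<Gamma>) * B\<^sup>2"
    unfolding patch_norm0_def P_def using j by (intro mult_right_mono Max_ge) auto
  finally have "x \<le> sqrt (real (patch_norm0 N M nn \<Gamma>) * B\<^sup>2)"
    unfolding x P_def by (rule real_sqrt_le_mono)
  then show "x \<le> sqrt (real (patch_norm0 N M nn \<Gamma>)) * B" using B by (simp add: real_sqrt_mult)
qed (use N in auto)

lemma abs_le_gmax: "c < dd \<Longrightarrow> V c \<noteq> 0 \<Longrightarrow> \<bar>V c\<bar> \<le> gmax dd V"
  unfolding gmax_def supp_def by (intro Max_ge) auto

lemma gmin_le_abs: "c < dd \<Longrightarrow> V c \<noteq> 0 \<Longrightarrow> gmin dd V \<le> \<bar>V c\<bar>"
  unfolding gmin_def supp_def by (intro Min_le) auto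

lemma gmax_nonneg: "\<exists>c<dd. V c \<noteq> 0 \<Longrightarrow> 0 \<le> gmax dd V"
  using abs_le_gmax abs_ge_zero order_trans by blast

lemma card_stripe_support_remove_le:
  assumes N: "N > 0" and k: "k < N" and c: "c \<in> stripe_idx N mc nprev k"
  shows "real (card ({c' \<in> stripe_idx N mc nprev k. V c' \<noteq> 0} - {c}))
    \<le> real (stripe_norm0 N mc nprev V) - (if V c = 0 then 0 else 1)"
proof -
  define S where "S = {c' \<in> stripe_idx N mc nprev k. V c' \<noteq> 0}"
  have "finite S" unfolding S_def
    using finite_subset[OF stripe_idx_subset[OF N]] by simp
  then have "card (S - {c}) = card S - (if V c = 0 then 0 else 1)"
    "V c \<noteq> 0 \<Longrightarrow> card S \<ge> 1"
    using c unfolding S_def by (auto simp: card_Diff_singleton_if card_gt_0_iff Suc_le_eq)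
  moreover have "card S \<le> stripe_norm0 N mc nprev V"
    unfolding S_def stripe_norm0_def using k by (intro Max_ge) auto
  ultimately show ?thesis unfolding S_def[symmetric] by (cases "V c = 0") auto
qed

locale local_dictionary =
  fixes N M mc nprev :: nat and D :: "nat \<Rightarrow> nat \<Rightarrow> real"
  assumes N_pos: "N > 0"
    and column_in_patch:
      "\<And>a c. a < N * M \<Longrightarrow> c < N * mc \<Longrightarrow> D a c \<noteq> 0 \<Longrightarrow> a \<in> patch_idx N M nprev (c div mc)"
    and unit_columns: "\<And>c. c < N * mc \<Longrightarrow> (\<Sum>a<N * M. (D a c)\<^sup>2) = 1"
begin

abbreviation \<mu> :: real where "\<mu> \<equiv> coherence (N * M) (N * mc) D"

definition gram :: "nat \<Rightarrow> nat \<Rightarrow> real" where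
  "gram c c' = (\<Sum>a<N * M. D a c * D a c')"

lemma column_nonzero:
  assumes "c < N * mc" obtains a where "a < N * M" "D a c \<noteq> 0"
proof -
  have "(\<Sum>a<N * M. (D a c)\<^sup>2) \<noteq> 0" using unit_columns[OF assms] by simp
  then obtain a where "a \<in> {..<N * M}" "(D a c)\<^sup>2 \<noteq> 0"
    by (rule sum.not_neutral_contains_not_neutral)
  then show thesis using that by simp
qed

lemma column_in_own_stripe:
  assumes c: "c < N * mc" shows "c \<in> stripe_idx N mc nprev (c div mc)"
proof -
  obtain a where "a < N * M" "D a c \<noteq> 0" using column_nonzero[OF c] .
  then have "a \<in> patch_idx N M nprev (c div mc)" using column_in_patch c by blast
  then have "\<bar>0::int\<bar> < int nprev" unfolding patch_idx_def by auto
  moreover have "int (c div mc) = (int (c div mc) + 0) mod int N"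
    using c by (simp add: less_mult_imp_div_less)
  moreover have "c mod mc < mc" using c by (cases mc) simp_all
  ultimately have "c div mc * mc + c mod mc \<in> stripe_idx N mc nprev (c div mc)"
    unfolding stripe_idx_def by blast
  then show ?thesis by simp
qed

lemma gram_nonzero_in_stripe:
  assumes c: "c < N * mc" and c': "c' < N * mc" and nz: "gram c c' \<noteq> 0"
  shows "c' \<in> stripe_idx N mc nprev (c div mc)"
proof -
  obtain a where a: "a < N * M" "D a c \<noteq> 0" "D a c' \<noteq> 0"
  proof -
    obtain a where "a \<in> {..<N * M}" "D a c * D a c' \<noteq> 0"
      using nz unfolding gram_def by (rule sum.not_neutral_contains_not_neutral)
    then show thesis using that by simp
  qed
  then have "M > 0" by (intro gr0I) simp
  moreover have "c' div mc < N" using c' by (simp add: less_mult_imp_div_less)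
  moreover have "c' mod mc < mc" using c' by (cases mc) simp_all
  ultimately have "c' div mc * mc + c' mod mc \<in> stripe_idx N mc nprev (c div mc)"
    using a c c' column_in_patch by (intro patch_overlap_in_stripe) auto
  then show ?thesis by simp
qed

lemma correlation_decomposition:
  assumes model: "\<And>a. a < N * M \<Longrightarrow> G a = mat_vec (N * mc) D \<Gamma> a" and c: "c < N * mc"
  shows "tr_mat_vec (N * M) D V c
    = \<Gamma> c + (\<Sum>c'\<in>{..<N * mc} - {c}. gram c c' * \<Gamma> c') - (\<Sum>a<N * M. D a c * (G a - V a))"
proof -
  have "(\<Sum>a<N * M. D a c * G a) = (\<Sum>a<N * M. \<Sum>c'<N * mc. D a c * D a c' * \<Gamma> c')"
    using model unfolding mat_vec_def by (auto simp: sum_distrib_left mult.assoc intro!: sum.cong)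
  also have "\<dots> = (\<Sum>c'<N * mc. gram c c' * \<Gamma> c')"
    unfolding gram_def by (subst sum.swap) (simp add: sum_distrib_right)
  also have "\<dots> = \<Gamma> c + (\<Sum>c'\<in>{..<N * mc} - {c}. gram c c' * \<Gamma> c')"
    using c unit_columns[OF c] by (simp add: sum.remove gram_def power2_eq_square)
  finally show ?thesis
    unfolding tr_mat_vec_def by (simp add: right_diff_distrib sum_subtractf)
qed

lemma abs_noise_correlation_le:
  assumes c: "c < N * mc"
  shows "\<bar>\<Sum>a<N * M. D a c * W a\<bar> \<le> patch_norm2 N M nprev W"
proof -
  define P where "P = patch_idx N M nprev (c div mc)"
  have P_sub: "P \<subseteq> {..<N * M}" unfolding P_def by (rule patch_idx_subset[OF N_pos])
  have "(\<Sum>a<N * M. D a c * W a) = (\<Sum>a\<in>P. D a c * W a)"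
    using P_sub column_in_patch[OF _ c] unfolding P_def by (intro sum.mono_neutral_right) auto
  then have "\<bar>\<Sum>a<N * M. D a c * W a\<bar> \<le> (\<Sum>a\<in>P. \<bar>D a c\<bar> * \<bar>W a\<bar>)"
    by (simp add: sum_abs[THEN order_trans] abs_mult)
  also have "\<dots> \<le> L2_set (\<lambda>a. D a c) P * L2_set W P" by (rule L2_set_mult_ineq)
  also have "\<dots> \<le> 1 * patch_norm2 N M nprev W"
  proof (rule mult_mono)
    have "(\<Sum>a\<in>P. (D a c)\<^sup>2) \<le> (\<Sum>a<N * M. (D a c)\<^sup>2)" using P_sub by (intro sum_mono2) auto
    then show "L2_set (\<lambda>a. D a c) P \<le> 1" unfolding L2_set_def using unit_columns[OF c] by simp
    show "L2_set W P \<le> patch_norm2 N M nprev W"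
      unfolding P_def using c by (intro L2_set_patch_le_patch_norm2) (simp add: less_mult_imp_div_less)
  qed simp_all
  finally show ?thesis by simp
qed

lemma abs_crosstalk_le:
  assumes c: "c < N * mc" and nz: "\<exists>c<N * mc. \<Gamma> c \<noteq> 0"
  shows "\<bar>\<Sum>c'\<in>{..<N * mc} - {c}. gram c c' * \<Gamma> c'\<bar>
    \<le> \<mu> * gmax (N * mc) \<Gamma> * (real (stripe_norm0 N mc nprev \<Gamma>) - (if \<Gamma> c = 0 then 0 else 1))"
proof -
  define k where "k = c div mc"
  define S where "S = {c' \<in> stripe_idx N mc nprev k. \<Gamma> c' \<noteq> 0} - {c}"
  have S_sub: "S \<subseteq> {..<N * mc} - {c}" unfolding S_def using stripe_idx_subset[OF N_pos] by blast
  have "\<bar>\<Sum>c'\<in>{..<N * mc} - {c}. gram c c' * \<Gamma> c'\<bar> \<le> (\<Sum>c'\<in>{..<N * mc} - {c}. \<bar>gram c c'\<bar> * \<bar>\<Gamma> c'\<bar>)"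
    by (simp add: sum_abs[THEN order_trans] abs_mult)
  also have "\<dots> = (\<Sum>c'\<in>S. \<bar>gram c c'\<bar> * \<bar>\<Gamma> c'\<bar>)"
    using S_sub gram_nonzero_in_stripe[OF c] unfolding S_def k_def by (intro sum.mono_neutral_right) auto
  also have "\<dots> \<le> (\<Sum>c'\<in>S. \<mu> * gmax (N * mc) \<Gamma>)"
  proof (rule sum_mono)
    fix c' assume "c' \<in> S"
    then have c': "c' < N * mc" "c' \<noteq> c" "\<Gamma> c' \<noteq> 0" using S_sub unfolding S_def by auto
    show "\<bar>gram c c'\<bar> * \<bar>\<Gamma> c'\<bar> \<le> \<mu> * gmax (N * mc) \<Gamma>"
      using abs_inner_le_coherence[OF c c'(1) c'(2)[symmetric]] abs_le_gmax[of c' _ \<Gamma>, OF c'(1,3)] coherence_nonneg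
      unfolding gram_def by (intro mult_mono) auto
  qed
  also have "\<dots> = \<mu> * gmax (N * mc) \<Gamma> * real (card S)" by simp
  also have "\<dots> \<le> \<mu> * gmax (N * mc) \<Gamma> * (real (stripe_norm0 N mc nprev \<Gamma>) - (if \<Gamma> c = 0 then 0 else 1))"
  proof (rule mult_left_mono)
    show "real (card S) \<le> real (stripe_norm0 N mc nprev \<Gamma>) - (if \<Gamma> c = 0 then 0 else 1)"
      unfolding S_def k_def using c column_in_own_stripe[OF c]
      by (intro card_stripe_support_remove_le[OF N_pos]) (simp_all add: less_mult_imp_div_less)
    show "0 \<le> \<mu> * gmax (N * mc) \<Gamma>" using coherence_nonneg gmax_nonneg[OF nz] by simp
  qed
  finally show ?thesis .
qed

lemma correlation_error_le:
  assumes model: "\<And>a. a < N * M \<Longrightarrow> G a = mat_vec (N * mc) D \<Gamma> a"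
    and nz: "\<exists>c<N * mc. \<Gamma> c \<noteq> 0" and c: "c < N * mc"
  shows "\<bar>tr_mat_vec (N * M) D V c - \<Gamma> c\<bar>
    \<le> \<mu> * gmax (N * mc) \<Gamma> * (real (stripe_norm0 N mc nprev \<Gamma>) - (if \<Gamma> c = 0 then 0 else 1))
      + patch_norm2 N M nprev (\<lambda>a. G a - V a)"
  using correlation_decomposition[OF model c, of V] abs_crosstalk_le[OF c nz]
    abs_noise_correlation_le[OF c, of "\<lambda>a. G a - V a"]
  by linarith

lemma hard_thr_recovers_layer:
  assumes model: "\<And>a. a < N * M \<Longrightarrow> G a = mat_vec (N * mc) D \<Gamma> a"
    and nz: "\<exists>c<N * mc. \<Gamma> c \<noteq> 0"
    and err: "patch_norm2 N M nprev (\<lambda>a. G a - V a) \<le> \<epsilon>"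
    and lower: "gmin (N * mc) \<Gamma> - (real (stripe_norm0 N mc nprev \<Gamma>) - 1) * \<mu> * gmax (N * mc) \<Gamma> - \<epsilon> > \<beta>"
    and upper: "\<beta> > real (stripe_norm0 N mc nprev \<Gamma>) * \<mu> * gmax (N * mc) \<Gamma> + \<epsilon>"
  shows "supp (N * mc) (hard_thr \<beta> (tr_mat_vec (N * M) D V)) = supp (N * mc) \<Gamma>"
    and "patch_norm2 N mc nn (\<lambda>c. \<Gamma> c - hard_thr \<beta> (tr_mat_vec (N * M) D V) c)
      \<le> sqrt (real (patch_norm0 N mc nn \<Gamma>))
        * (\<epsilon> + \<mu> * (real (stripe_norm0 N mc nprev \<Gamma>) - 1) * gmax (N * mc) \<Gamma>)"
proof -
  define z where "z = tr_mat_vec (N * M) D V"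
  define s where "s = real (stripe_norm0 N mc nprev \<Gamma>)"
  define gM where "gM = gmax (N * mc) \<Gamma>"
  have z_err: "\<bar>z c - \<Gamma> c\<bar> \<le> \<mu> * gM * (s - (if \<Gamma> c = 0 then 0 else 1)) + \<epsilon>" if "c < N * mc" for c
    using correlation_error_le[OF model nz that, of V] err unfolding z_def s_def gM_def by linarith
  have large: "\<bar>z c\<bar> > \<beta>" if c: "c < N * mc" "\<Gamma> c \<noteq> 0" for c
    using z_err[OF c(1)] gmin_le_abs[of c _ \<Gamma>, OF c] lower c(2) unfolding s_def gM_def by (simp add: algebra_simps)
  have small: "\<bar>z c\<bar> < \<beta>" if c: "c < N * mc" "\<Gamma> c = 0" for c
    using z_err[OF c(1)] upper c(2) unfolding s_def gM_def by (simp add: algebra_simps)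
  have "0 \<le> \<epsilon>" using patch_norm2_nonneg[OF N_pos] err by (rule order_trans)
  moreover have "0 \<le> real (stripe_norm0 N mc nprev \<Gamma>) * \<mu> * gmax (N * mc) \<Gamma>"
    using coherence_nonneg gmax_nonneg[OF nz] by simp
  ultimately have "\<beta> > 0" using upper by linarith
  then show "supp (N * mc) (hard_thr \<beta> z) = supp (N * mc) \<Gamma>"
    unfolding supp_def hard_thr_def using large small by fastforce
  obtain c0 where c0: "c0 < N * mc" "\<Gamma> c0 \<noteq> 0" using nz by blast
  show "patch_norm2 N mc nn (\<lambda>c. \<Gamma> c - hard_thr \<beta> z c) \<le> sqrt (real (patch_norm0 N mc nn \<Gamma>))
      * (\<epsilon> + \<mu> * (s - 1) * gM)"
  proof (rule patch_norm2_le_sqrt_patch_norm0[OF N_pos])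
    show "0 \<le> \<epsilon> + \<mu> * (s - 1) * gM"
      using z_err[OF c0(1)] c0(2) abs_ge_zero[of "z c0 - \<Gamma> c0"] by (simp add: algebra_simps)
    show "\<Gamma> c - hard_thr \<beta> z c = 0" if "c < N * mc" "\<Gamma> c = 0" for c
      using small[OF that] that(2) unfolding hard_thr_def by simp
    show "\<bar>\<Gamma> c - hard_thr \<beta> z c\<bar> \<le> \<epsilon> + \<mu> * (s - 1) * gM" if "c < N * mc" "\<Gamma> c \<noteq> 0" for c
      using z_err[OF that(1)] large[OF that] that(2) unfolding hard_thr_def by (simp add: abs_minus_commute algebra_simps)
  qed
qed

end

lemma local_dictionary_conv_dict:
  assumes "N > 0" and "\<And>c. c < N * mc \<Longrightarrow> (\<Sum>a<N * M. (conv_dict N M nprev mc F a c)\<^sup>2) = 1"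
  shows "local_dictionary N M mc nprev (conv_dict N M nprev mc F)"
  using assms conv_dict_nonzero_in_patch by unfold_locales auto

lemma ghat_layer_recovery:
  assumes N: "N > 0" and i: "i \<ge> 1"
    and unit: "\<forall>c<N * m i. (\<Sum>a<N * m (i - 1). (dict N m n F i a c)\<^sup>2) = 1"
    and model: "\<forall>a<N * m (i - 1). \<Gamma> (i - 1) a = mat_vec (N * m i) (dict N m n F i) (\<Gamma> i) a"
    and nz: "\<exists>c<N * m i. \<Gamma> i c \<noteq> 0"
    and err: "patch_norm2 N (m (i - 1)) (n (i - 1)) (\<lambda>a. \<Gamma> (i - 1) a - ghat N m n F \<beta> Y (i - 1) a)
      \<le> eps_seq N m n F \<Gamma> \<epsilon>0 (i - 1)"
    and thr: "gmin (N * m i) (\<Gamma> i)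
          - (real (stripe_norm0 N (m i) (n (i - 1)) (\<Gamma> i)) - 1) * mu_layer N m n F i * gmax (N * m i) (\<Gamma> i)
          - eps_seq N m n F \<Gamma> \<epsilon>0 (i - 1) > \<beta> i
        \<and> \<beta> i > real (stripe_norm0 N (m i) (n (i - 1)) (\<Gamma> i)) * mu_layer N m n F i * gmax (N * m i) (\<Gamma> i)
          + eps_seq N m n F \<Gamma> \<epsilon>0 (i - 1)"
  shows "supp (N * m i) (ghat N m n F \<beta> Y i) = supp (N * m i) (\<Gamma> i)
    \<and> patch_norm2 N (m i) (n i) (\<lambda>c. \<Gamma> i c - ghat N m n F \<beta> Y i c) \<le> eps_seq N m n F \<Gamma> \<epsilon>0 i"
proof -
  obtain j where j: "i = Suc j" using i by (cases i) auto
  have "local_dictionary N (m j) (m (Suc j)) (n j) (conv_dict N (m j) (n j) (m (Suc j)) (F (Suc j)))"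
    using unit unfolding j dict_def by (intro local_dictionary_conv_dict[OF N]) simp
  then interpret local_dictionary N "m j" "m (Suc j)" "n j" "dict N m n F (Suc j)"
    by (simp add: dict_def)
  note layer = hard_thr_recovers_layer[OF model[unfolded j diff_Suc_1, rule_format] nz[unfolded j]
      err[unfolded j diff_Suc_1] thr[unfolded j diff_Suc_1 mu_layer_def, THEN conjunct1]
      thr[unfolded j diff_Suc_1 mu_layer_def, THEN conjunct2]]
  show ?thesis unfolding j using layer by (simp add: mu_layer_def)
qed

theorem theorem3:
  fixes N K :: nat and m n :: "nat \<Rightarrow> nat"
    and F :: "nat \<Rightarrow> nat \<Rightarrow> nat \<Rightarrow> real"
    and \<Gamma> :: "nat \<Rightarrow> nat \<Rightarrow> real"
    and Y E :: "nat \<Rightarrow> real" and \<epsilon>0 :: real and \<beta> :: "nat \<Rightarrow> real"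
  assumes N_pos: "N \<ge> 1"
    and m0: "m 0 = 1"
    and n_range: "\<forall>i\<le>K. 1 \<le> n i \<and> n i \<le> N"
    and unit_cols: "\<forall>i\<in>{1..K}. \<forall>c<N * m i.
        (\<Sum>a<N * m (i - 1). (dict N m n F i a c)\<^sup>2) = 1"
    and model: "\<forall>i\<in>{1..K}. \<forall>a<N * m (i - 1).
        \<Gamma> (i - 1) a = mat_vec (N * m i) (dict N m n F i) (\<Gamma> i) a"
    and nonzero: "\<forall>i\<in>{1..K}. \<exists>c<N * m i. \<Gamma> i c \<noteq> 0"
    and noisy: "\<forall>a<N. Y a = \<Gamma> 0 a + E a"
    and noise_bound: "patch_norm2 N (m 0) (n 0) E \<le> \<epsilon>0"
    and cond_a: "\<forall>i\<in>{1..K}.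
        real (stripe_norm0 N (m i) (n (i - 1)) (\<Gamma> i))
        < 1/2 * (1 + 1 / mu_layer N m n F i * (gmin (N * m i) (\<Gamma> i) / gmax (N * m i) (\<Gamma> i)))
          - 1 / mu_layer N m n F i * (eps_seq N m n F \<Gamma> \<epsilon>0 (i - 1) / gmax (N * m i) (\<Gamma> i))"
    and cond_b: "\<forall>i\<in>{1..K}.
        gmin (N * m i) (\<Gamma> i)
          - (real (stripe_norm0 N (m i) (n (i - 1)) (\<Gamma> i)) - 1) * mu_layer N m n F i * gmax (N * m i) (\<Gamma> i)
          - eps_seq N m n F \<Gamma> \<epsilon>0 (i - 1) > \<beta> i
        \<and> \<beta> i > real (stripe_norm0 N (m i) (n (i - 1)) (\<Gamma> i)) * mu_layer N m n F i * gmax (N * m i) (\<Gamma> i)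
          + eps_seq N m n F \<Gamma> \<epsilon>0 (i - 1)"
  shows "\<forall>i\<in>{1..K}.
      supp (N * m i) (ghat N m n F \<beta> Y i) = supp (N * m i) (\<Gamma> i)
    \<and> patch_norm2 N (m i) (n i) (\<lambda>c. \<Gamma> i c - ghat N m n F \<beta> Y i c) \<le> eps_seq N m n F \<Gamma> \<epsilon>0 i"
proof -
  have N: "N > 0" using N_pos by simp
  have layer: "supp (N * m i) (ghat N m n F \<beta> Y i) = supp (N * m i) (\<Gamma> i)
      \<and> patch_norm2 N (m i) (n i) (\<lambda>c. \<Gamma> i c - ghat N m n F \<beta> Y i c) \<le> eps_seq N m n F \<Gamma> \<epsilon>0 i"
    if i: "i \<in> {1..K}" and err: "patch_norm2 N (m (i - 1)) (n (i - 1))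
      (\<lambda>c. \<Gamma> (i - 1) c - ghat N m n F \<beta> Y (i - 1) c) \<le> eps_seq N m n F \<Gamma> \<epsilon>0 (i - 1)" for i
    using i by (intro ghat_layer_recovery[OF N _ bspec[OF unit_cols i] bspec[OF model i]
        bspec[OF nonzero i] err bspec[OF cond_b i]]) simp
  have err: "patch_norm2 N (m i) (n i) (\<lambda>c. \<Gamma> i c - ghat N m n F \<beta> Y i c) \<le> eps_seq N m n F \<Gamma> \<epsilon>0 i"
    if "i \<le> K" for i
    using that
  proof (induction i)
    case 0
    have "patch_norm2 N (m 0) (n 0) (\<lambda>c. \<Gamma> 0 c - ghat N m n F \<beta> Y 0 c) = patch_norm2 N (m 0) (n 0) E"
      using noisy m0 by (intro patch_norm2_cong_abs[OF N]) simp
    then show ?case using noise_bound by simp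
  next
    case (Suc j)
    then show ?case using layer[of "Suc j"] by simp
  qed
  show ?thesis using layer err[of "_ - 1"] by (simp add: le_diff_conv)
qed

end
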